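(* Let $T:S_n\to GL(d,\mathbb{C})$ be a representation with character $\chi$, and let $\sigma,\tau\in S_n$ both have the same prime order $p$. Then $T(\sigma)$ and $T(\tau)$ are similar if and only if $\chi(\sigma)=\chi(\tau)$. *)

theory Defs
  imports "HOL-Algebra.Sym_Groups" "HOL-Algebra.Multiplicative_Group" "Jordan_Normal_Form.Jordan_Normal_Form"
begin

definition sym_rep :: "nat \<Rightarrow> nat \<Rightarrow> ((nat \<Rightarrow> nat) \<Rightarrow> complex mat) \<Rightarrow> bool" where
  "sym_rep n d T \<longleftrightarrow>
     (\<forall>\<sigma>\<in>carrier (sym_group n). T \<sigma> \<in> carrier_mat d d \<and> invertible_mat (T \<sigma>)) \<and>
     (\<forall>\<sigma>\<in>carrier (sym_group n). \<forall>\<tau>\<in>carrier (sym_group n).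
        T (\<sigma> \<otimes>\<^bsub>sym_group n\<^esub> \<tau>) = T \<sigma> * T \<tau>)"

definition mat_trace :: "'a :: comm_monoid_add mat \<Rightarrow> 'a" where
  "mat_trace A = (\<Sum>i<dim_row A. A $$ (i, i))"

definition character :: "((nat \<Rightarrow> nat) \<Rightarrow> complex mat) \<Rightarrow> (nat \<Rightarrow> nat) \<Rightarrow> complex" where
  "character T \<sigma> = mat_trace (T \<sigma>)"

end

theory Submission
  imports Defs "HOL-Combinatorics.Orbits" "HOL-Number_Theory.Cong"
    "Jordan_Normal_Form.Jordan_Normal_Form_Existence"
begin

text \<open>Let \<open>\<sigma>\<close> have prime order \<open>p\<close> and \<open>0 < j < p\<close>. Relabelling every orbit of \<open>\<sigma>\<close>
  by \<open>\<sigma>^i r \<mapsto> \<sigma>^(j i) r\<close> conjugates \<open>\<sigma>\<close> into \<open>\<sigma>^j\<close>, so \<open>tr T(\<sigma>)^j = \<chi>(\<sigma>^j) = \<chi>(\<sigma>)\<close>.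
  Since \<open>T(\<sigma>)^p = 1\<close>, the Jordan form of \<open>T(\<sigma>)\<close> is diagonal with \<open>p\<close>-th roots of unity
  on the diagonal, and the multiplicity of such a root \<open>\<omega>\<close> is
  \<open>(1/p) \<Sum>\<^bsub>j<p\<^esub> \<omega>^(-j) tr T(\<sigma>)^j\<close>. Hence \<open>\<chi>(\<sigma>) = \<chi>(\<tau>)\<close> forces \<open>T(\<sigma>)\<close> and \<open>T(\<tau>)\<close>
  to have the same eigenvalues with multiplicities, and two diagonalizable matrices with the
  same eigenvalues are similar.\<close>

section \<open>Coprime powers of a permutation are conjugate to it\<close>

definition orbit_rep :: "('a \<Rightarrow> 'a) \<Rightarrow> 'a \<Rightarrow> 'a" where
  "orbit_rep f x = (SOME r. r \<in> orbit f x)"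

definition power_conjugator :: "('a \<Rightarrow> 'a) \<Rightarrow> nat \<Rightarrow> 'a \<Rightarrow> 'a" where
  "power_conjugator f k x = (f ^^ (k * funpow_dist f (orbit_rep f x) x)) (orbit_rep f x)"

lemma funpow_eq_mult:
  fixes f :: "'a \<Rightarrow> 'a"
  assumes "(f ^^ a) r = (f ^^ b) r"
  shows "(f ^^ (c * a)) r = (f ^^ (c * b)) r"
proof (induction c)
  case (Suc c)
  have comm: "(f ^^ m) ((f ^^ l) y) = (f ^^ l) ((f ^^ m) y)" for m l y
    by (metis add.commute comp_apply funpow_add)
  have "(f ^^ (Suc c * a)) r = (f ^^ a) ((f ^^ (c * b)) r)"
    using Suc by (simp add: funpow_add)
  also have "\<dots> = (f ^^ (c * b)) ((f ^^ b) r)"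
    using assms comm[of a "c * b" r] by simp
  also have "\<dots> = (f ^^ (Suc c * b)) r"
    by (simp add: funpow_add comm[of "c * b" b r])
  finally show ?case .
qed simp

lemma power_conjugator_fixpoint:
  assumes "f x = x"
  shows "power_conjugator f k x = x"
proof -
  have "orbit_rep f x = x"
    using assms orbit_eq_singleton_iff[of f x] by (simp add: orbit_rep_def)
  moreover have "(f ^^ j) x = x" for j
    using assms by (induction j) simp_all
  ultimately show ?thesis
    by (simp add: power_conjugator_def)
qed

context
  fixes f :: "'a \<Rightarrow> 'a" and p :: nat
  assumes funpow_period: "f ^^ p = id" and period_pos: "0 < p"
begin

lemma self_in_orbit_periodic: "x \<in> orbit f x"
proof -
  have "(f ^^ p) x = x" by (simp add: funpow_period)
  thus ?thesis using period_pos unfolding orbit_altdef by (metis (mono_tags) mem_Collect_eq)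
qed

lemma orbit_eq_if_in_orbit:
  assumes "y \<in> orbit f x"
  shows "orbit f y = orbit f x"
  using assms orbit_swap[OF self_in_orbit_periodic assms] by (auto intro: orbit_trans)

lemma orbit_rep_in_orbit: "orbit_rep f x \<in> orbit f x"
  unfolding orbit_rep_def using self_in_orbit_periodic by (rule someI)

lemma orbit_rep_eq:
  assumes "y \<in> orbit f x"
  shows "orbit_rep f y = orbit_rep f x"
  unfolding orbit_rep_def orbit_eq_if_in_orbit[OF assms] ..

lemma funpow_dist_orbit_rep: "(f ^^ funpow_dist f (orbit_rep f x) x) (orbit_rep f x) = x"
proof (rule funpow_dist_prop)
  show "x \<in> orbit f (orbit_rep f x)"
    using self_in_orbit_periodic orbit_eq_if_in_orbit[OF orbit_rep_in_orbit] by simp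
qed

lemma power_conjugator_funpow: "power_conjugator f k (f x) = (f ^^ k) (power_conjugator f k x)"
proof -
  let ?r = "orbit_rep f x" and ?i = "funpow_dist f (orbit_rep f x) x"
  have r: "orbit_rep f (f x) = ?r" by (rule orbit_rep_eq) (rule orbit.base)
  have "(f ^^ funpow_dist f ?r (f x)) ?r = (f ^^ Suc ?i) ?r"
    using funpow_dist_orbit_rep[of "f x"] funpow_dist_orbit_rep[of x] r by simp
  hence "(f ^^ (k * funpow_dist f ?r (f x))) ?r = (f ^^ (k * Suc ?i)) ?r"
    by (rule funpow_eq_mult)
  thus ?thesis unfolding power_conjugator_def r by (simp add: funpow_add)
qed

lemma power_conjugator_inverse:
  assumes "[k * k' = 1] (mod p)"
  shows "power_conjugator f k' (power_conjugator f k x) = x"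
proof -
  let ?r = "orbit_rep f x" and ?i = "funpow_dist f (orbit_rep f x) x"
  let ?y = "power_conjugator f k x"
  have "?y \<in> orbit f ?r"
    unfolding power_conjugator_def
    by (intro funpow_in_orbit) (use self_in_orbit_periodic in blast)
  hence "?y \<in> orbit f x" using orbit_eq_if_in_orbit[OF orbit_rep_in_orbit] by simp
  hence r: "orbit_rep f ?y = ?r" by (rule orbit_rep_eq)
  have "(f ^^ funpow_dist f ?r ?y) ?r = (f ^^ (k * ?i)) ?r"
    using funpow_dist_orbit_rep[of ?y] unfolding r by (simp add: power_conjugator_def)
  hence "(f ^^ (k' * funpow_dist f ?r ?y)) ?r = (f ^^ (k' * (k * ?i))) ?r"
    by (rule funpow_eq_mult)
  also have "\<dots> = (f ^^ ((k' * (k * ?i)) mod p)) ?r"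
    by (rule funpow_mod_eq[symmetric]) (simp add: funpow_period)
  also have "(k' * (k * ?i)) mod p = ?i mod p"
    using cong_scalar_right[OF assms, of ?i] by (simp add: cong_def ac_simps)
  also have "(f ^^ (?i mod p)) ?r = x"
    using funpow_mod_eq[where f = f and n = p and x = ?r and m = ?i] funpow_dist_orbit_rep[of x]
    by (simp add: funpow_period)
  finally show ?thesis unfolding power_conjugator_def[of f k' ?y] r .
qed

theorem permutes_funpow_conjugate:
  assumes perm: "f permutes S" and "coprime k p"
  obtains \<pi> where "\<pi> permutes S" and "f ^^ k = \<pi> \<circ> f \<circ> inv' \<pi>"
proof -
  obtain k' where k': "[k * k' = 1] (mod p)"
    using cong_solve_coprime_nat[OF \<open>coprime k p\<close>] by auto
  have k'_inv: "[k' * k = 1] (mod p)" using k' by (simp add: mult.commute)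
  let ?\<pi> = "power_conjugator f k"
  have \<pi>_perm: "?\<pi> permutes S"
    unfolding permutes_def
  proof (intro conjI allI impI)
    show "?\<pi> x = x" if "x \<notin> S" for x
      using perm that by (intro power_conjugator_fixpoint) (simp add: permutes_not_in)
    show "\<exists>!x. ?\<pi> x = y" for y
      using power_conjugator_inverse[OF k'] power_conjugator_inverse[OF k'_inv] by metis
  qed
  have "?\<pi> \<circ> f = (f ^^ k) \<circ> ?\<pi>"
    using power_conjugator_funpow by auto
  hence "?\<pi> \<circ> f \<circ> inv' ?\<pi> = (f ^^ k) \<circ> (?\<pi> \<circ> inv' ?\<pi>)"
    by (simp add: comp_assoc)
  hence "f ^^ k = ?\<pi> \<circ> f \<circ> inv' ?\<pi>"
    using permutes_inv_o(1)[OF \<pi>_perm] by simp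
  with \<pi>_perm show thesis by (rule that)
qed

end

section \<open>Matrices of finite order\<close>

lemma mat_trace_mult_comm:
  fixes A B :: "'a::comm_ring_1 mat"
  assumes "A \<in> carrier_mat n m" and "B \<in> carrier_mat m n"
  shows "mat_trace (A * B) = mat_trace (B * A)"
proof -
  have "mat_trace (A * B) = (\<Sum>i<n. \<Sum>k<m. A $$ (i, k) * B $$ (k, i))"
    unfolding mat_trace_def using assms
    by (auto simp: scalar_prod_def atLeast0LessThan intro!: sum.cong)
  also have "\<dots> = (\<Sum>k<m. \<Sum>i<n. B $$ (k, i) * A $$ (i, k))"
    by (subst sum.swap) (simp add: mult.commute)
  also have "\<dots> = mat_trace (B * A)"
    unfolding mat_trace_def using assms
    by (auto simp: scalar_prod_def atLeast0LessThan intro!: sum.cong)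
  finally show ?thesis .
qed

lemma mat_trace_similar:
  fixes A B :: "'a::comm_ring_1 mat"
  assumes "similar_mat A B"
  shows "mat_trace A = mat_trace B"
proof -
  obtain n P Q where A: "A \<in> carrier_mat n n" and B: "B \<in> carrier_mat n n"
    and P: "P \<in> carrier_mat n n" and Q: "Q \<in> carrier_mat n n"
    and QP: "Q * P = 1\<^sub>m n" and ABPQ: "A = P * B * Q"
    using similar_matD[OF assms] by blast
  have "mat_trace A = mat_trace (Q * (P * B))"
    unfolding ABPQ using P B Q by (intro mat_trace_mult_comm) auto
  also have "Q * (P * B) = B"
    using P B Q QP by (simp add: assoc_mult_mat[symmetric, of Q n n P n B n])
  finally show ?thesis .
qed

lemma mat_diag_pow: "mat_diag n f ^\<^sub>m k = mat_diag n (\<lambda>i. f i ^ k)"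
proof (induction k)
  case 0
  show ?case by (rule eq_matI) (auto simp: mat_diag_def)
qed (simp add: power_commutes)

lemma mat_trace_mat_diag: "mat_trace (mat_diag n f) = (\<Sum>i<n. f i)"
  unfolding mat_trace_def mat_diag_def by simp

lemma mat_trace_pow_similar_diag:
  fixes as :: "'a::comm_ring_1 list"
  assumes "similar_mat A (mat_diag (length as) ((!) as))"
  shows "mat_trace (A ^\<^sub>m j) = (\<Sum>a\<leftarrow>as. a ^ j)"
proof -
  have "similar_mat (A ^\<^sub>m j) (mat_diag (length as) ((!) as) ^\<^sub>m j)"
    using assms similar_mat_wit_pow unfolding similar_mat_def by blast
  hence "mat_trace (A ^\<^sub>m j) = (\<Sum>i<length as. as ! i ^ j)"
    by (simp add: mat_trace_similar[of "A ^\<^sub>m j"] mat_diag_pow mat_trace_mat_diag)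
  thus ?thesis by (simp add: sum_list_sum_nth atLeast0LessThan)
qed

definition perm_mat :: "nat \<Rightarrow> (nat \<Rightarrow> nat) \<Rightarrow> 'a::zero_neq_one mat" where
  "perm_mat n f = mat n n (\<lambda>(i, j). of_bool (j = f i))"

lemma perm_mat_carrier [simp]: "perm_mat n f \<in> carrier_mat n n"
  and perm_mat_dim [simp]: "dim_row (perm_mat n f) = n" "dim_col (perm_mat n f) = n"
  unfolding perm_mat_def by simp_all

lemma perm_mat_mult:
  fixes B :: "'a::semiring_1 mat"
  assumes f: "f permutes {..<n}" and B: "B \<in> carrier_mat n m"
  shows "perm_mat n f * B = mat n m (\<lambda>(i, j). B $$ (f i, j))"
proof (rule eq_matI)
  fix i j assume "i < dim_row (mat n m (\<lambda>(i, j). B $$ (f i, j)))"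
    and "j < dim_col (mat n m (\<lambda>(i, j). B $$ (f i, j)))"
  hence ij: "i < n" "j < m" by simp_all
  hence "{0..<n} \<inter> {l. l = f i} = {f i}" using permutes_in_image[OF f, of i] by auto
  thus "(perm_mat n f * B) $$ (i, j) = mat n m (\<lambda>(i, j). B $$ (f i, j)) $$ (i, j)"
    using ij B by (simp add: perm_mat_def scalar_prod_def)
qed (use B in simp_all)

lemma mult_transpose_perm_mat:
  fixes B :: "'a::semiring_1 mat"
  assumes f: "f permutes {..<n}" and B: "B \<in> carrier_mat m n"
  shows "B * transpose_mat (perm_mat n f) = mat m n (\<lambda>(i, j). B $$ (i, f j))"
proof (rule eq_matI)
  fix i j assume "i < dim_row (mat m n (\<lambda>(i, j). B $$ (i, f j)))"
    and "j < dim_col (mat m n (\<lambda>(i, j). B $$ (i, f j)))"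
  hence ij: "i < m" "j < n" by simp_all
  hence "{0..<n} \<inter> {l. l = f j} = {f j}" using permutes_in_image[OF f, of j] by auto
  thus "(B * transpose_mat (perm_mat n f)) $$ (i, j)
      = mat m n (\<lambda>(i, j). B $$ (i, f j)) $$ (i, j)"
    using ij B by (simp add: perm_mat_def scalar_prod_def)
qed (use B in simp_all)

lemma similar_mat_permute:
  fixes A :: "'a::field mat"
  assumes f: "f permutes {..<n}" and A: "A \<in> carrier_mat n n"
  shows "similar_mat (mat n n (\<lambda>(i, j). A $$ (f i, f j))) A"
proof (rule similar_matI)
  let ?P = "perm_mat n f :: 'a mat"
  have Pt: "transpose_mat ?P \<in> carrier_mat n n" by simp
  have "?P * transpose_mat ?P = mat n n (\<lambda>(i, j). ?P $$ (i, f j))"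
    by (rule mult_transpose_perm_mat[OF f perm_mat_carrier])
  also have "\<dots> = 1\<^sub>m n"
  proof (rule eq_matI)
    fix i j assume "i < dim_row (1\<^sub>m n :: 'a mat)" "j < dim_col (1\<^sub>m n :: 'a mat)"
    thus "mat n n (\<lambda>(i, j). ?P $$ (i, f j)) $$ (i, j) = 1\<^sub>m n $$ (i, j)"
      using permutes_in_image[OF f, of j] permutes_inj[OF f]
      by (simp add: perm_mat_def inj_eq)
  qed simp_all
  finally show PPt: "?P * transpose_mat ?P = 1\<^sub>m n" .
  show "transpose_mat ?P * ?P = 1\<^sub>m n"
    by (rule mat_mult_left_right_inverse[OF perm_mat_carrier Pt PPt])
  have fn: "f j < n" if "j < n" for j
    using permutes_in_image[OF f] that by simp
  have "?P * A * transpose_mat ?P = mat n n (\<lambda>(i, j). A $$ (f i, f j))"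
    unfolding perm_mat_mult[OF f A]
    by (subst mult_transpose_perm_mat[OF f]) (auto intro!: eq_matI simp: fn)
  thus "mat n n (\<lambda>(i, j). A $$ (f i, f j)) = ?P * A * transpose_mat ?P" ..
qed (use A in simp_all)

lemma similar_mat_diag_mset:
  fixes as bs :: "'a::field list"
  assumes "mset as = mset bs"
  shows "similar_mat (mat_diag (length as) ((!) as)) (mat_diag (length bs) ((!) bs))"
proof -
  obtain f where f: "f permutes {..<length bs}" and as: "permute_list f bs = as"
    using mset_eq_permutation[OF assms] .
  let ?D = "mat_diag (length bs) ((!) bs)"
  have "mat_diag (length as) ((!) as) = mat (length bs) (length bs) (\<lambda>(i, j). ?D $$ (f i, f j))"
  proof (rule eq_matI)
    fix i j assume "i < dim_row (mat (length bs) (length bs) (\<lambda>(i, j). ?D $$ (f i, f j)))"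
      "j < dim_col (mat (length bs) (length bs) (\<lambda>(i, j). ?D $$ (f i, f j)))"
    thus "mat_diag (length as) ((!) as) $$ (i, j)
        = mat (length bs) (length bs) (\<lambda>(i, j). ?D $$ (f i, f j)) $$ (i, j)"
      using permutes_in_image[OF f] permutes_inj[OF f] permute_list_nth[OF f]
      by (simp add: mat_diag_def inj_eq flip: as)
  qed (simp_all add: mat_diag_def flip: as)
  thus ?thesis using similar_mat_permute[OF f mat_diag_dim] by simp
qed

lemma jordan_matrix_unit_blocks: "jordan_matrix (map (Pair 1) as) = mat_diag (length as) ((!) as)"
proof (induction as)
  case Nil
  show ?case unfolding jordan_matrix_def mat_diag_def by (intro eq_matI) auto
next
  case (Cons a as)
  have len: "sum_list (map fst (map (Pair (1::nat)) as)) = length as"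
    by (induction as) auto
  have "jordan_matrix (map (Pair 1) (a # as)) = four_block_mat (jordan_block 1 a)
      (0\<^sub>m 1 (length as)) (0\<^sub>m (length as) 1) (mat_diag (length as) ((!) as))"
    unfolding list.map(2) jordan_matrix_Cons len Cons.IH ..
  also have "\<dots> = mat_diag (length (a # as)) ((!) (a # as))"
  proof (rule eq_matI)
    fix i j assume "i < dim_row (mat_diag (length (a # as)) ((!) (a # as)))"
      "j < dim_col (mat_diag (length (a # as)) ((!) (a # as)))"
    thus "four_block_mat (jordan_block 1 a) (0\<^sub>m 1 (length as)) (0\<^sub>m (length as) 1)
        (mat_diag (length as) ((!) as)) $$ (i, j) = mat_diag (length (a # as)) ((!) (a # as)) $$ (i, j)"
      by (cases i; cases j) (auto simp: mat_diag_def)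
  qed (simp_all add: mat_diag_def)
  finally show ?case .
qed

lemma four_block_mat_eq_one:
  fixes X Y :: "'a::{zero,one} mat"
  assumes X: "X \<in> carrier_mat k k" and Y: "Y \<in> carrier_mat m m"
    and XY: "four_block_mat X (0\<^sub>m k m) (0\<^sub>m m k) Y = 1\<^sub>m (k + m)"
  shows "X = 1\<^sub>m k" and "Y = 1\<^sub>m m"
proof (rule eq_matI)
  fix i j assume "i < dim_row (1\<^sub>m k :: 'a mat)" "j < dim_col (1\<^sub>m k :: 'a mat)"
  thus "X $$ (i, j) = 1\<^sub>m k $$ (i, j)"
    using X Y arg_cong[OF XY, of "\<lambda>M. M $$ (i, j)"] by simp
next
  show "Y = 1\<^sub>m m"
  proof (rule eq_matI)
    fix i j assume "i < dim_row (1\<^sub>m m :: 'a mat)" "j < dim_col (1\<^sub>m m :: 'a mat)"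
    thus "Y $$ (i, j) = 1\<^sub>m m $$ (i, j)"
      using X Y arg_cong[OF XY, of "\<lambda>M. M $$ (i + k, j + k)"] by simp
  qed (use Y in simp_all)
qed (use X in simp_all)

lemma jordan_block_pow_eq_one_if_jordan_matrix_pow_eq_one:
  fixes n_as :: "(nat \<times> 'a::comm_ring_1) list"
  assumes "jordan_matrix n_as ^\<^sub>m p = 1\<^sub>m (sum_list (map fst n_as))" and "(n, a) \<in> set n_as"
  shows "jordan_block n a ^\<^sub>m p = 1\<^sub>m n"
  using assms
proof (induction n_as)
  case (Cons kb n_as)
  obtain k b where kb: "kb = (k, b)" by force
  let ?m = "sum_list (map fst n_as)"
  have "four_block_mat (jordan_block k b ^\<^sub>m p) (0\<^sub>m k ?m) (0\<^sub>m ?m k) (jordan_matrix n_as ^\<^sub>m p)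
      = 1\<^sub>m (k + ?m)"
    using Cons.prems(1) unfolding kb jordan_matrix_Cons
    by (subst (asm) pow_four_block_mat[OF jordan_block_carrier jordan_matrix_carrier]) simp
  from four_block_mat_eq_one[OF _ _ this]
  have "jordan_block k b ^\<^sub>m p = 1\<^sub>m k" and "jordan_matrix n_as ^\<^sub>m p = 1\<^sub>m ?m"
    by auto
  thus ?case using Cons kb by auto
qed simp

text \<open>For \<open>n > 1\<close> the entry of \<open>jordan_block n a ^\<^sub>m p\<close> just above the diagonal
  is \<open>p * a ^ (p - 1)\<close>, which is nonzero.\<close>
lemma jordan_block_pow_eq_one:
  fixes a :: "'a::{idom,ring_char_0}"
  assumes "jordan_block n a ^\<^sub>m p = 1\<^sub>m n" and "0 < n" and "0 < p"
  shows "n = 1" and "a ^ p = 1"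
proof -
  have entry: "(jordan_block n a ^\<^sub>m p) $$ (i, j) = 1\<^sub>m n $$ (i, j)" for i j
    using assms(1) by simp
  show ap: "a ^ p = 1"
    using entry[of 0 0] assms(2) by (simp add: jordan_block_pow)
  show "n = 1"
  proof (rule ccontr)
    assume "n \<noteq> 1"
    hence "of_nat p * a ^ (p - 1) = 0"
      using entry[of 0 1] assms(2) by (simp add: jordan_block_pow)
    hence "a = 0" using assms(3) by simp
    thus False using ap assms(3) by (simp add: power_0_left)
  qed
qed

lemma finite_order_mat_diagonalizable:
  fixes A :: "complex mat"
  assumes A: "A \<in> carrier_mat d d" and "0 < p" and Ap: "A ^\<^sub>m p = 1\<^sub>m d"
  obtains as where "length as = d" and "\<forall>a\<in>set as. a ^ p = 1"
    and "similar_mat A (mat_diag d ((!) as))"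
proof -
  obtain n_as where jnf: "jordan_nf A n_as"
    using char_poly_factorized[OF A] jordan_nf_exists[OF A] by blast
  let ?J = "jordan_matrix n_as"
  obtain P Q where wit: "similar_mat_wit A ?J P Q"
    using jnf unfolding jordan_nf_def similar_mat_def by blast
  note PQ = similar_mat_witD2[OF A wit]
  have dim: "sum_list (map fst n_as) = d"
    using PQ(5) by (metis carrier_matD(1) jordan_matrix_dim(1))
  have "?J ^\<^sub>m p = Q * A ^\<^sub>m p * P"
    by (rule similar_mat_wit_pow_id[OF similar_mat_wit_sym[OF wit]])
  also have "\<dots> = 1\<^sub>m d" using PQ Ap by simp
  finally have Jp: "?J ^\<^sub>m p = 1\<^sub>m (sum_list (map fst n_as))" by (simp only: dim)
  have blocks: "n = 1 \<and> a ^ p = 1" if "(n, a) \<in> set n_as" for n a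
  proof -
    have "0 < n" using jnf that unfolding jordan_nf_def by (metis fst_conv gr0I image_eqI)
    with jordan_block_pow_eq_one[OF jordan_block_pow_eq_one_if_jordan_matrix_pow_eq_one[OF Jp that]]
    show ?thesis using \<open>0 < p\<close> by blast
  qed
  define as where "as = map snd n_as"
  have n_as: "n_as = map (Pair 1) as"
    unfolding as_def using blocks by (induction n_as) auto
  show thesis
  proof (rule that)
    show len: "length as = d" using dim unfolding n_as by (induction as arbitrary: d) auto
    show "\<forall>a\<in>set as. a ^ p = 1" using blocks unfolding as_def by auto
    show "similar_mat A (mat_diag d ((!) as))"
      using jnf unfolding jordan_nf_def n_as jordan_matrix_unit_blocks len by simp
  qed
qed

lemma power_sums_count_root_of_unity:
  fixes \<omega> :: complex
  assumes "\<forall>a\<in>set as. a ^ p = 1" and "\<omega> ^ p = 1" and "0 < p"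
  shows "(\<Sum>j<p. inverse \<omega> ^ j * (\<Sum>a\<leftarrow>as. a ^ j)) = of_nat p * of_nat (count (mset as) \<omega>)"
  using assms(1)
proof (induction as)
  case (Cons a as)
  have "\<omega> \<noteq> 0" using assms(2,3) by (auto simp: power_0_left)
  let ?x = "a * inverse \<omega>"
  have "?x ^ p = 1" using Cons.prems assms(2) by (simp add: power_mult_distrib power_inverse)
  moreover have "?x = 1 \<longleftrightarrow> a = \<omega>" using \<open>\<omega> \<noteq> 0\<close> by (auto simp: field_simps)
  ultimately have geometric: "(\<Sum>j<p. ?x ^ j) = (if a = \<omega> then of_nat p else 0)"
    by (auto simp: sum_gp_strict)
  have "(\<Sum>j<p. inverse \<omega> ^ j * (\<Sum>b\<leftarrow>a # as. b ^ j))
      = (\<Sum>j<p. ?x ^ j) + (\<Sum>j<p. inverse \<omega> ^ j * (\<Sum>b\<leftarrow>as. b ^ j))"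
    by (simp add: distrib_left sum.distrib power_mult_distrib mult.commute)
  also have "\<dots> = of_nat p * of_nat (count (mset (a # as)) \<omega>)"
    unfolding geometric using Cons by (auto simp: algebra_simps)
  finally show ?case .
qed simp

lemma mset_eq_if_power_sums_eq:
  fixes as bs :: "complex list"
  assumes "\<forall>a\<in>set as. a ^ p = 1" and "\<forall>b\<in>set bs. b ^ p = 1" and "0 < p"
    and "\<And>j. j < p \<Longrightarrow> (\<Sum>a\<leftarrow>as. a ^ j) = (\<Sum>b\<leftarrow>bs. b ^ j)"
  shows "mset as = mset bs"
proof (rule multiset_eqI)
  fix \<omega> :: complex
  show "count (mset as) \<omega> = count (mset bs) \<omega>"
  proof (cases "\<omega> ^ p = 1")
    case True
    have "of_nat p * of_nat (count (mset as) \<omega>) = (of_nat p * of_nat (count (mset bs) \<omega>) :: complex)"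
      using assms(4)
      by (simp flip: power_sums_count_root_of_unity[OF assms(1) True \<open>0 < p\<close>]
                     power_sums_count_root_of_unity[OF assms(2) True \<open>0 < p\<close>])
    thus ?thesis using \<open>0 < p\<close> by simp
  next
    case False
    hence "\<omega> \<notin> set as" and "\<omega> \<notin> set bs" using assms(1,2) by auto
    thus ?thesis by (metis count_mset_0_iff)
  qed
qed

theorem similar_mat_if_finite_order_traces_eq:
  fixes A B :: "complex mat"
  assumes A: "A \<in> carrier_mat d d" and B: "B \<in> carrier_mat d d" and "0 < p"
    and Ap: "A ^\<^sub>m p = 1\<^sub>m d" and Bp: "B ^\<^sub>m p = 1\<^sub>m d"
    and traces: "\<And>j. 0 < j \<Longrightarrow> j < p \<Longrightarrow> mat_trace (A ^\<^sub>m j) = mat_trace (B ^\<^sub>m j)"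
  shows "similar_mat A B"
proof -
  obtain as where as: "length as = d" "\<forall>a\<in>set as. a ^ p = 1" "similar_mat A (mat_diag d ((!) as))"
    using finite_order_mat_diagonalizable[OF A \<open>0 < p\<close> Ap] .
  obtain bs where bs: "length bs = d" "\<forall>b\<in>set bs. b ^ p = 1" "similar_mat B (mat_diag d ((!) bs))"
    using finite_order_mat_diagonalizable[OF B \<open>0 < p\<close> Bp] .
  have "(\<Sum>a\<leftarrow>as. a ^ j) = (\<Sum>b\<leftarrow>bs. b ^ j)" if "j < p" for j
  proof (cases "j = 0")
    case False
    have "(\<Sum>a\<leftarrow>as. a ^ j) = mat_trace (A ^\<^sub>m j)"
      using mat_trace_pow_similar_diag[of A as j] as(1,3) by simp
    also have "\<dots> = mat_trace (B ^\<^sub>m j)"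
      using False that by (intro traces) simp_all
    also have "\<dots> = (\<Sum>b\<leftarrow>bs. b ^ j)"
      using mat_trace_pow_similar_diag[of B bs j] bs(1,3) by simp
    finally show ?thesis .
  qed (simp add: as(1) bs(1) sum_list_triv)
  hence "mset as = mset bs"
    by (rule mset_eq_if_power_sums_eq[OF as(2) bs(2) \<open>0 < p\<close>])
  hence "similar_mat (mat_diag d ((!) as)) (mat_diag d ((!) bs))"
    using similar_mat_diag_mset[of as bs] as(1) bs(1) by simp
  thus ?thesis
    using similar_mat_trans[OF as(3) similar_mat_trans[OF _ similar_mat_sym[OF bs(3)]]] by blast
qed

section \<open>Characters of the symmetric group\<close>

lemma sym_group_funpow_closed:
  assumes "x \<in> carrier (sym_group n)"
  shows "x ^^ k \<in> carrier (sym_group n)"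
  using assms by (induction k) (auto simp: sym_group_carrier permutes_compose)

lemma sym_group_nat_pow: "x [^]\<^bsub>sym_group n\<^esub> (k::nat) = x ^^ k"
  by (induction k) (simp_all add: sym_group_one sym_group_mult comp_def funpow_swap1)

lemma sym_group_funpow_ord:
  assumes "x \<in> carrier (sym_group n)"
  shows "x ^^ group.ord (sym_group n) x = id"
  using group.pow_ord_eq_1[OF sym_group_is_group assms]
  by (simp add: sym_group_nat_pow sym_group_one)

context
  fixes n d T
  assumes rep: "sym_rep n d T"
begin

lemma sym_rep_carrier: "x \<in> carrier (sym_group n) \<Longrightarrow> T x \<in> carrier_mat d d"
  using rep unfolding sym_rep_def by simp

lemma sym_rep_comp:
  "x \<in> carrier (sym_group n) \<Longrightarrow> y \<in> carrier (sym_group n) \<Longrightarrow> T (x \<circ> y) = T x * T y"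
  using rep unfolding sym_rep_def by (simp add: sym_group_mult)

text \<open>\<open>sym_rep\<close> does not require \<open>T id = 1\<^sub>m d\<close>; it holds because \<open>T id\<close> is an
  invertible idempotent.\<close>
lemma sym_rep_id: "T id = 1\<^sub>m d"
proof -
  have id: "id \<in> carrier (sym_group n)" by (simp add: sym_group_carrier)
  let ?X = "T id"
  have X: "?X \<in> carrier_mat d d" and "invertible_mat ?X"
    using rep id unfolding sym_rep_def by auto
  then obtain B where XB: "?X * B = 1\<^sub>m d" and BX: "B * ?X = 1\<^sub>m (dim_row B)"
    unfolding invertible_mat_def inverts_mat_def by auto
  have B: "B \<in> carrier_mat d d"
    using X arg_cong[OF XB, of dim_col] arg_cong[OF BX, of dim_col] by auto
  have "1\<^sub>m d = ?X * B" using XB ..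
  also have "\<dots> = (?X * ?X) * B" using sym_rep_comp[OF id id] by simp
  also have "\<dots> = ?X * (?X * B)" by (rule assoc_mult_mat[OF X X B])
  also have "\<dots> = ?X" using XB X by simp
  finally show ?thesis ..
qed

lemma sym_rep_funpow:
  assumes x: "x \<in> carrier (sym_group n)"
  shows "T (x ^^ k) = T x ^\<^sub>m k"
proof (induction k)
  case 0
  have "T x ^\<^sub>m 0 = 1\<^sub>m d" using sym_rep_carrier[OF x] by simp
  thus ?case using sym_rep_id by (simp only: funpow.simps(1))
next
  case (Suc k)
  have "T (x ^^ Suc k) = T (x ^^ k \<circ> x)" by (simp only: funpow_Suc_right)
  also have "\<dots> = T x ^\<^sub>m k * T x"
    using x sym_group_funpow_closed Suc.IH by (simp add: sym_rep_comp)
  finally show ?case by (simp only: pow_mat.simps(2))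
qed

lemma character_conjugate:
  assumes g: "g \<in> carrier (sym_group n)" and x: "x \<in> carrier (sym_group n)"
  shows "character T (g \<circ> x \<circ> inv' g) = character T x"
proof -
  have g': "inv' g \<in> carrier (sym_group n)"
    using g by (simp add: sym_group_carrier permutes_inv)
  have x_g': "x \<circ> inv' g \<in> carrier (sym_group n)"
    using x g' by (simp add: sym_group_carrier permutes_compose)
  have Tg: "T g \<in> carrier_mat d d" and Tx: "T x \<in> carrier_mat d d"
    and Tg': "T (inv' g) \<in> carrier_mat d d"
    using g x g' by (simp_all add: sym_rep_carrier)
  have "T (inv' g) * T g = T (inv' g \<circ> g)" using g g' by (simp add: sym_rep_comp)
  also have "\<dots> = 1\<^sub>m d"
    using g permutes_inv_o(2)[of g "{1..n}"] by (simp add: sym_group_carrier sym_rep_id)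
  finally have inverse: "T (inv' g) * T g = 1\<^sub>m d" .
  have "T (g \<circ> x \<circ> inv' g) = T g * (T x * T (inv' g))"
    using g x g' x_g' by (simp add: comp_assoc sym_rep_comp)
  hence "mat_trace (T (g \<circ> x \<circ> inv' g)) = mat_trace ((T x * T (inv' g)) * T g)"
    using Tg Tx Tg' by (simp add: mat_trace_mult_comm[of "T g" d d])
  also have "(T x * T (inv' g)) * T g = T x"
    using Tx Tg' Tg by (simp add: assoc_mult_mat[OF Tx Tg' Tg] inverse)
  finally show ?thesis unfolding character_def .
qed

lemma character_coprime_power:
  assumes x: "x \<in> carrier (sym_group n)" and "x ^^ p = id" and "0 < p" and "coprime k p"
  shows "character T (x ^^ k) = character T x"
proof -
  obtain \<pi> where \<pi>: "\<pi> permutes {1..n}" and conj: "x ^^ k = \<pi> \<circ> x \<circ> inv' \<pi>"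
    using permutes_funpow_conjugate[OF \<open>x ^^ p = id\<close> \<open>0 < p\<close>] x \<open>coprime k p\<close>
    unfolding sym_group_carrier by metis
  show ?thesis
    unfolding conj using \<pi> x by (simp add: character_conjugate sym_group_carrier)
qed

end

theorem corollary3p4:
  fixes n d p :: nat and T :: "(nat \<Rightarrow> nat) \<Rightarrow> complex mat" and \<sigma> \<tau> :: "nat \<Rightarrow> nat"
  assumes "sym_rep n d T"
    and "\<sigma> \<in> carrier (sym_group n)" and "\<tau> \<in> carrier (sym_group n)"
    and "prime p"
    and "group.ord (sym_group n) \<sigma> = p" and "group.ord (sym_group n) \<tau> = p"
  shows "similar_mat (T \<sigma>) (T \<tau>) \<longleftrightarrow> character T \<sigma> = character T \<tau>"
proof
  assume "similar_mat (T \<sigma>) (T \<tau>)"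
  thus "character T \<sigma> = character T \<tau>" unfolding character_def by (rule mat_trace_similar)
next
  assume \<chi>: "character T \<sigma> = character T \<tau>"
  note rep = \<open>sym_rep n d T\<close>
  have "0 < p" using \<open>prime p\<close> by (simp add: prime_gt_0_nat)
  have \<sigma>p: "\<sigma> ^^ p = id" and \<tau>p: "\<tau> ^^ p = id"
    using sym_group_funpow_ord assms(2,3,5,6) by metis+
  show "similar_mat (T \<sigma>) (T \<tau>)"
  proof (rule similar_mat_if_finite_order_traces_eq[OF _ _ \<open>0 < p\<close>])
    show "T \<sigma> \<in> carrier_mat d d" "T \<tau> \<in> carrier_mat d d"
      using sym_rep_carrier[OF rep] assms(2,3) by auto
    show "T \<sigma> ^\<^sub>m p = 1\<^sub>m d" "T \<tau> ^\<^sub>m p = 1\<^sub>m d"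
      using \<sigma>p \<tau>p assms(2,3)
      by (simp_all flip: sym_rep_funpow[OF rep] add: sym_rep_id[OF rep])
    fix j assume "0 < j" "j < p"
    hence "coprime p j"
      using \<open>prime p\<close> by (intro prime_imp_coprime) (simp_all add: nat_dvd_not_less)
    thus "mat_trace (T \<sigma> ^\<^sub>m j) = mat_trace (T \<tau> ^\<^sub>m j)"
      using \<chi> \<sigma>p \<tau>p \<open>0 < p\<close> assms(2,3)
      by (simp flip: sym_rep_funpow[OF rep] character_def
               add: character_coprime_power[OF rep] coprime_commute)
  qed
qed

end
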